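(* Let $A\in\mathbb{R}_{\max}^{n\times n}$ with $\lambda(A)=0$, let $g=g(\mathrm{crit}(A))\ge2$, assume $(n,g)\ne(2,2)$, $T_1(A)=\mathrm{DM}(g,n)$, and that $\mathrm{crit}(A)$ contains, up to choice of first node, a unique cycle $Z_0$ of length $g$. Let $W_0$ be an interesting walk, and renumber the nodes so that $1,\dots,g$ are the nodes of $Z_0$ and $W_0=(g+1)\cdots n\,(1\cdots n)^g$. Then $\mathcal{D}(A)$ has, up to the choice of its first node, a unique Hamiltonian cycle of maximal weight among all Hamiltonian cycles, and it is the cycle $(1,2,\dots,n,1)$.
   Context: Max-plus semiring $\mathbb{R}_{\max}=\mathbb{R}\cup\{-\infty\}$ with $a\oplus b=\max(a,b)$, $a\otimes b=a+b$; $(AB)_{ij}=\max_k(a_{ik}+b_{kj})$; $A^t$ is the $t$-th max-plus power, $A^0=I$. $\mathcal{D}(A)$ is the digraph on $\{1,\dots,n\}$ with arc $(i,j)$ of weight $a_{ij}$ whenever $a_{ij}\ne-\infty$. A walk is a node sequence whose consecutive pairs are arcs, its length is its number of arcs and its weight the sum of its arc weights; cycles are closed walks with no proper closed subwalk; a Hamiltonian cycle visits every node. $\lambda(A)$ is the maximal cycle mean. $\mathrm{crit}(A)$ is the subgraph of all nodes and arcs of cycles attaining $\lambda(A)$; its nodes are critical. $g(\mathrm{crit}(A))$ is the maximum over strongly connected components of $\mathrm{crit}(A)$ of their minimal cycle length. The cyclicity of $\mathrm{crit}(A)$ is the lcm over components of the gcd of their cycle lengths. CSR terms: with $\gamma$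 the cyclicity of $\mathrm{crit}(A)$ and $\lambda(A)=0$, $M=I\oplus N\oplus\dots\oplus N^{n-1}$ where $N=A^\gamma$: $c_{ij}=m_{ij}$ if $j$ critical, else $-\infty$; $r_{ij}=m_{ij}$ if $i$ critical, else $-\infty$; $s_{ij}=a_{ij}$ if $(i,j)$ is an arc of $\mathrm{crit}(A)$, else $-\infty$; $CS^tR[A]$ is the product $CS^tR$. $B_N$ has $(B_N)_{ij}=-\infty$ if $i$ or $j$ is critical and $a_{ij}$ otherwise. $T_1(A)$ is the least $T\ge0$ with $A^t=CS^tR[A]\oplus B_N^t$ for all $t\ge T$. $\mathrm{DM}(g,n)=g(n-2)+n$. Twice optimal / interesting walks: a walk $W$ from $i$ to $j$ passing through at least one node of $Z_0$ is twice optimal if it has maximal weight among all walks from $i$ to $j$ passing through a node of $Z_0$ whose length is congruent to the length of $W$ modulo $g$, and has minimal length among all such walks of maximal weight. It is interesting if it is twice optimal and has length $\mathrm{DM}(g,n)+g-1$. *)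

theory Defs
  imports Complex_Main "HOL-Library.Extended_Real"
begin

text \<open>Max-plus matrices of size n are functions nat => nat => ereal whose relevant
  entries are those with indices in {1..n}; entries are assumed to differ from +infinity
  (so that they lie in R union {-infinity}).\<close>

type_synonym mat = "nat \<Rightarrow> nat \<Rightarrow> ereal"

definition mp_mult :: "nat \<Rightarrow> mat \<Rightarrow> mat \<Rightarrow> mat" where
  "mp_mult n A B = (\<lambda>i j. SUP k\<in>{1..n}. A i k + B k j)"

definition mp_id :: mat where
  "mp_id = (\<lambda>i j. if i = j then 0 else -\<infinity>)"

primrec mp_pow :: "nat \<Rightarrow> mat \<Rightarrow> nat \<Rightarrow> mat" where
  "mp_pow n A 0 = mp_id"
| "mp_pow n A (Suc t) = mp_mult n (mp_pow n A t) A"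

definition is_walk :: "nat \<Rightarrow> mat \<Rightarrow> nat list \<Rightarrow> bool" where
  "is_walk n A w \<longleftrightarrow> w \<noteq> [] \<and> set w \<subseteq> {1..n} \<and>
     (\<forall>k. Suc k < length w \<longrightarrow> A (w!k) (w!Suc k) \<noteq> -\<infinity>)"

definition wlen :: "nat list \<Rightarrow> nat" where
  "wlen w = length w - 1"

definition wweight :: "mat \<Rightarrow> nat list \<Rightarrow> ereal" where
  "wweight A w = (\<Sum>k<length w - 1. A (w!k) (w!Suc k))"

definition is_cycle :: "nat \<Rightarrow> mat \<Rightarrow> nat list \<Rightarrow> bool" where
  "is_cycle n A c \<longleftrightarrow> is_walk n A c \<and> length c \<ge> 2 \<and> hd c = last c \<and> distinct (butlast c)"

definition same_cycle :: "nat list \<Rightarrow> nat list \<Rightarrow> bool" where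
  "same_cycle c d \<longleftrightarrow> (\<exists>k. butlast c = rotate k (butlast d))"

definition ham_cycle :: "nat \<Rightarrow> mat \<Rightarrow> nat list \<Rightarrow> bool" where
  "ham_cycle n A c \<longleftrightarrow> is_cycle n A c \<and> set c = {1..n}"

definition cycle_mean :: "mat \<Rightarrow> nat list \<Rightarrow> ereal" where
  "cycle_mean A c = wweight A c / ereal (real (wlen c))"

text \<open>lambda(A), the maximal cycle mean (-infinity if there is no cycle).\<close>

definition mcm :: "nat \<Rightarrow> mat \<Rightarrow> ereal" where
  "mcm n A = (SUP c\<in>{c. is_cycle n A c}. cycle_mean A c)"

definition crit_cycle :: "nat \<Rightarrow> mat \<Rightarrow> nat list \<Rightarrow> bool" where
  "crit_cycle n A c \<longleftrightarrow> is_cycle n A c \<and> cycle_mean A c = mcm n A"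

definition crit_nodes :: "nat \<Rightarrow> mat \<Rightarrow> nat set" where
  "crit_nodes n A = {i. \<exists>c. crit_cycle n A c \<and> i \<in> set c}"

definition crit_arcs :: "nat \<Rightarrow> mat \<Rightarrow> (nat \<times> nat) set" where
  "crit_arcs n A = {(c!k, c!Suc k) | c k. crit_cycle n A c \<and> Suc k < length c}"

definition crit_graph_cycle :: "nat \<Rightarrow> mat \<Rightarrow> nat list \<Rightarrow> bool" where
  "crit_graph_cycle n A c \<longleftrightarrow> is_cycle n A c \<and>
     (\<forall>k. Suc k < length c \<longrightarrow> (c!k, c!Suc k) \<in> crit_arcs n A)"

definition crit_comp :: "nat \<Rightarrow> mat \<Rightarrow> nat \<Rightarrow> nat set" where
  "crit_comp n A i = {j. (i, j) \<in> (crit_arcs n A)\<^sup>* \<and> (j, i) \<in> (crit_arcs n A)\<^sup>*}"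

definition crit_components :: "nat \<Rightarrow> mat \<Rightarrow> nat set set" where
  "crit_components n A = crit_comp n A ` crit_nodes n A"

definition comp_cycle_lengths :: "nat \<Rightarrow> mat \<Rightarrow> nat set \<Rightarrow> nat set" where
  "comp_cycle_lengths n A C = wlen ` {c. crit_graph_cycle n A c \<and> set c \<subseteq> C}"

definition girth_crit :: "nat \<Rightarrow> mat \<Rightarrow> nat" where
  "girth_crit n A = Max ((\<lambda>C. Min (comp_cycle_lengths n A C)) ` crit_components n A)"

definition cyclicity_crit :: "nat \<Rightarrow> mat \<Rightarrow> nat" where
  "cyclicity_crit n A = Lcm ((\<lambda>C. Gcd (comp_cycle_lengths n A C)) ` crit_components n A)"

definition csr_M :: "nat \<Rightarrow> mat \<Rightarrow> mat" where
  "csr_M n A = (\<lambda>i j. SUP k\<in>{..<n}. mp_pow n (mp_pow n A (cyclicity_crit n A)) k i j)"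

definition csr_C :: "nat \<Rightarrow> mat \<Rightarrow> mat" where
  "csr_C n A = (\<lambda>i j. if j \<in> crit_nodes n A then csr_M n A i j else -\<infinity>)"

definition csr_R :: "nat \<Rightarrow> mat \<Rightarrow> mat" where
  "csr_R n A = (\<lambda>i j. if i \<in> crit_nodes n A then csr_M n A i j else -\<infinity>)"

definition csr_S :: "nat \<Rightarrow> mat \<Rightarrow> mat" where
  "csr_S n A = (\<lambda>i j. if (i, j) \<in> crit_arcs n A then A i j else -\<infinity>)"

definition csr_term :: "nat \<Rightarrow> mat \<Rightarrow> nat \<Rightarrow> mat" where
  "csr_term n A t = mp_mult n (mp_mult n (csr_C n A) (mp_pow n (csr_S n A) t)) (csr_R n A)"

definition B_N :: "nat \<Rightarrow> mat \<Rightarrow> mat" where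
  "B_N n A = (\<lambda>i j. if i \<in> crit_nodes n A \<or> j \<in> crit_nodes n A then -\<infinity> else A i j)"

definition T1 :: "nat \<Rightarrow> mat \<Rightarrow> nat" where
  "T1 n A = (LEAST T. \<forall>t\<ge>T. \<forall>i\<in>{1..n}. \<forall>j\<in>{1..n}.
      mp_pow n A t i j = max (csr_term n A t i j) (mp_pow n (B_N n A) t i j))"

definition DM :: "nat \<Rightarrow> nat \<Rightarrow> nat" where
  "DM g n = g * (n - 2) + n"

definition walk_through :: "nat \<Rightarrow> mat \<Rightarrow> nat list \<Rightarrow> nat \<Rightarrow> nat \<Rightarrow> nat list \<Rightarrow> bool" where
  "walk_through n A Z i j w \<longleftrightarrow> is_walk n A w \<and> hd w = i \<and> last w = j \<and> set w \<inter> set Z \<noteq> {}"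

definition twice_optimal :: "nat \<Rightarrow> mat \<Rightarrow> nat \<Rightarrow> nat list \<Rightarrow> nat list \<Rightarrow> bool" where
  "twice_optimal n A g Z w \<longleftrightarrow> walk_through n A Z (hd w) (last w) w \<and>
     (\<forall>v. walk_through n A Z (hd w) (last w) v \<and> wlen v mod g = wlen w mod g \<longrightarrow>
        wweight A v \<le> wweight A w \<and> (wweight A v = wweight A w \<longrightarrow> wlen w \<le> wlen v))"

definition interesting :: "nat \<Rightarrow> mat \<Rightarrow> nat \<Rightarrow> nat list \<Rightarrow> nat list \<Rightarrow> bool" where
  "interesting n A g Z w \<longleftrightarrow> twice_optimal n A g Z w \<and> wlen w = DM g n + g - 1"

end

theory Submission
  imports Defs
begin

text \<open>
  Write H for the cycle (n, 1, 2, ..., n), so that W0 is the path g+1 ... n followed by g rounds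
  of H. Twice optimality of W0 allows us to replace the suffix H^g by any closed walk Q at n through
  node 1 of length divisible by g; applied to Q^g this shows that H has maximal weight among all
  closed walks at n through 1, and that any other closed walk of the same weight is at least as
  long. (If g = n, the same replacement by the trivial closed walk contradicts lambda(A) = 0, so
  g < n.) In particular H, a rotation of (1, ..., n, 1), is a Hamiltonian cycle of maximal weight.
  If a second Hamiltonian cycle C of the same weight existed, crossing C and H at a node where
  they disagree would produce two closed walks through 1 of total weight twice the maximum and
  total length 2n, hence both of length n, which forces the crossing indices to coincide.
\<close>

fun path_sum :: "('b \<Rightarrow> 'b \<Rightarrow> 'a::comm_monoid_add) \<Rightarrow> 'b list \<Rightarrow> 'a" where
  "path_sum f [] = 0"
| "path_sum f [x] = 0"
| "path_sum f (x # y # zs) = f x y + path_sum f (y # zs)"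

text \<open>Since real_of_ereal sends infinite values to 0, rweight is meaningful only on walks, where it
  agrees with wweight (lemma wweight_eq_rweight).\<close>

definition rweight :: "mat \<Rightarrow> nat list \<Rightarrow> real" where
  "rweight A w = path_sum (\<lambda>i j. real_of_ereal (A i j)) w"

definition wjoin :: "'b list \<Rightarrow> 'b list \<Rightarrow> 'b list" where
  "wjoin xs ys = xs @ tl ys"

lemma path_sum_wjoin:
  "xs \<noteq> [] \<Longrightarrow> ys \<noteq> [] \<Longrightarrow> last xs = hd ys \<Longrightarrow>
    path_sum f (wjoin xs ys) = path_sum f xs + path_sum f ys"
proof (induction f xs rule: path_sum.induct)
  case (2 f x)
  then show ?case by (cases ys) (auto simp: wjoin_def)
qed (auto simp: wjoin_def add.assoc)

lemma rweight_wjoin: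
  "xs \<noteq> [] \<Longrightarrow> ys \<noteq> [] \<Longrightarrow> last xs = hd ys \<Longrightarrow>
    rweight A (wjoin xs ys) = rweight A xs + rweight A ys"
  unfolding rweight_def by (rule path_sum_wjoin)

lemma wweight_eq_path_sum: "wweight A w = path_sum A w"
proof (induction A w rule: path_sum.induct)
  case (3 f x y zs)
  have "wweight f (x # y # zs) = (\<Sum>k<Suc (length zs). f ((x#y#zs)!k) ((x#y#zs)!Suc k))"
    by (simp add: wweight_def)
  also have "\<dots> = f x y + (\<Sum>k<length zs. f ((y#zs)!k) ((y#zs)!Suc k))"
    by (subst sum.lessThan_Suc_shift) simp
  finally show ?case using 3 by (simp add: wweight_def)
qed (auto simp: wweight_def)

lemma is_walk_Cons2:
  "is_walk n A (x # y # zs) \<longleftrightarrow> x \<in> {1..n} \<and> A x y \<noteq> -\<infinity> \<and> is_walk n A (y # zs)"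
  unfolding is_walk_def by (auto simp: less_Suc_eq_0_disj)

lemma wweight_eq_rweight:
  assumes fin: "\<forall>i\<in>{1..n}. \<forall>j\<in>{1..n}. A i j \<noteq> \<infinity>"
  shows "is_walk n A w \<Longrightarrow> wweight A w = ereal (rweight A w)"
proof (induction w rule: induct_list012)
  case (3 x y zs)
  then have "x \<in> {1..n}" "y \<in> {1..n}" "A x y \<noteq> -\<infinity>" "is_walk n A (y # zs)"
    by (auto simp: is_walk_Cons2 is_walk_def)
  then show ?case
    using 3 fin by (cases "A x y") (auto simp: wweight_eq_path_sum rweight_def)
qed (auto simp: wweight_eq_path_sum rweight_def)

lemma hd_wjoin: "xs \<noteq> [] \<Longrightarrow> hd (wjoin xs ys) = hd xs"
  by (simp add: wjoin_def)

lemma last_wjoin: "xs \<noteq> [] \<Longrightarrow> ys \<noteq> [] \<Longrightarrow> last xs = hd ys \<Longrightarrow> last (wjoin xs ys) = last ys"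
  by (cases ys) (auto simp: wjoin_def)

lemma wlen_wjoin: "xs \<noteq> [] \<Longrightarrow> ys \<noteq> [] \<Longrightarrow> wlen (wjoin xs ys) = wlen xs + wlen ys"
  by (cases xs; cases ys) (auto simp: wjoin_def wlen_def)

lemma set_wjoin: "xs \<noteq> [] \<Longrightarrow> ys \<noteq> [] \<Longrightarrow> last xs = hd ys \<Longrightarrow>
    set (wjoin xs ys) = set xs \<union> set ys"
  by (cases ys) (auto simp: wjoin_def)

lemma is_walk_wjoin:
  "is_walk n A xs \<Longrightarrow> is_walk n A ys \<Longrightarrow> last xs = hd ys \<Longrightarrow> is_walk n A (wjoin xs ys)"
proof (induction xs rule: induct_list012)
  case (2 x)
  then show ?case by (cases ys) (auto simp: wjoin_def)
next
  case (3 x y zs)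
  then show ?case by (auto simp: is_walk_Cons2 wjoin_def)
qed (simp add: is_walk_def)

lemma is_walk_take: "is_walk n A w \<Longrightarrow> 0 < k \<Longrightarrow> is_walk n A (take k w)"
  by (auto simp: is_walk_def dest: in_set_takeD)

lemma is_walk_drop: "is_walk n A w \<Longrightarrow> k < length w \<Longrightarrow> is_walk n A (drop k w)"
  by (auto simp: is_walk_def dest: in_set_dropD)

lemma wjoin_take_drop: "k < length xs \<Longrightarrow> wjoin (take (Suc k) xs) (drop k xs) = xs"
  by (metis append_take_drop_id drop_Suc wjoin_def tl_drop)

lemma rweight_take_drop:
  assumes "k < length xs"
  shows "rweight A xs = rweight A (take (Suc k) xs) + rweight A (drop k xs)"
proof -
  have "last (take (Suc k) xs) = hd (drop k xs)"
    using assms by (simp add: take_Suc_conv_app_nth hd_drop_conv_nth)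
  then show ?thesis
    using rweight_wjoin[of "take (Suc k) xs" "drop k xs" A] wjoin_take_drop[OF assms] assms
    by (cases xs) auto
qed

lemma is_walk_wjoinD:
  assumes "is_walk n A (wjoin xs ys)" "xs \<noteq> []" "ys \<noteq> []" "last xs = hd ys"
  shows "is_walk n A xs" "is_walk n A ys"
proof -
  have "take (length xs) (wjoin xs ys) = xs" by (simp add: wjoin_def)
  then show "is_walk n A xs" using is_walk_take[OF assms(1), of "length xs"] assms(2) by simp
  have "drop (length xs - 1) xs = [last xs]"
    using assms(2) by (metis append_butlast_last_id append_eq_conv_conj length_butlast)
  then have "drop (length xs - 1) (wjoin xs ys) = ys"
    using assms(2-4) by (cases ys) (auto simp: wjoin_def)
  moreover have "length xs - 1 < length (wjoin xs ys)"
    using assms(2) by (cases xs) (auto simp: wjoin_def)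
  ultimately show "is_walk n A ys" using is_walk_drop[OF assms(1)] by metis
qed

primrec wpow :: "'b list \<Rightarrow> nat \<Rightarrow> 'b list" where
  "wpow w 0 = [hd w]"
| "wpow w (Suc k) = wjoin w (wpow w k)"

lemma wpow_closed:
  assumes "w \<noteq> []" "hd w = last w"
  shows "wpow w k \<noteq> [] \<and> hd (wpow w k) = hd w \<and> last (wpow w k) = hd w
    \<and> wlen (wpow w k) = k * wlen w"
proof (induction k)
  case (Suc k)
  then have "last (wpow w (Suc k)) = hd w"
    using assms by (simp add: last_wjoin)
  moreover have "wlen (wpow w (Suc k)) = Suc k * wlen w"
    using Suc assms by (simp add: wlen_wjoin)
  ultimately show ?case
    using assms by (simp add: hd_wjoin wjoin_def)
qed (simp add: wlen_def)

lemma rweight_wpow: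
  assumes "w \<noteq> []" "hd w = last w"
  shows "rweight A (wpow w k) = real k * rweight A w"
proof (induction k)
  case (Suc k)
  then show ?case
    using wpow_closed[OF assms, of k] assms by (simp add: rweight_wjoin algebra_simps)
qed (simp add: rweight_def)

lemma is_walk_wpow:
  assumes "is_walk n A w" "hd w = last w"
  shows "is_walk n A (wpow w k)"
proof (induction k)
  case 0
  then show ?case using assms by (cases w) (auto simp: is_walk_def)
next
  case (Suc k)
  have "w \<noteq> []" using assms(1) by (simp add: is_walk_def)
  then show ?case
    using Suc assms wpow_closed[of w k] by (simp add: is_walk_wjoin)
qed

lemma is_walk_wpowD:
  assumes "is_walk n A (wpow w k)" "0 < k" "w \<noteq> []" "hd w = last w"
  shows "is_walk n A w"
proof -
  obtain j where k: "k = Suc j" using assms(2) by (cases k) auto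
  have "wpow w j \<noteq> []" "last w = hd (wpow w j)" using wpow_closed[OF assms(3,4), of j] assms(4) by auto
  then show ?thesis using is_walk_wjoinD(1)[of n A w "wpow w j"] assms(1,3) k by simp
qed

lemma set_wpow: "0 < k \<Longrightarrow> set w \<subseteq> set (wpow w k)"
  by (cases k) (auto simp: wjoin_def)

lemma tl_wpow_Cons: "tl (wpow (a # xs) k) = concat (replicate k xs)"
  by (induction k) (auto simp: wjoin_def)

definition closed_rotate1 :: "'b list \<Rightarrow> 'b list" where
  "closed_rotate1 c = tl c @ [c ! 1]"

lemma closed_rotate1:
  assumes "length c \<ge> 2" "hd c = last c" "is_walk n A c"
  shows "length (closed_rotate1 c) = length c" "hd (closed_rotate1 c) = last (closed_rotate1 c)"
    "is_walk n A (closed_rotate1 c)" "rweight A (closed_rotate1 c) = rweight A c"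
    "butlast (closed_rotate1 c) = rotate1 (butlast c)" "set (closed_rotate1 c) = set c"
proof -
  obtain x y zs where c: "c = x # y # zs"
    using assms(1) by (cases c; cases "tl c") auto
  have lx: "last (y # zs) = x" using assms(2) c by simp
  have rot: "closed_rotate1 c = wjoin (y # zs) [x, y]" by (simp add: closed_rotate1_def wjoin_def c)
  have c_join: "c = wjoin [x, y] (y # zs)" by (simp add: wjoin_def c)
  have "is_walk n A [x, y]" "is_walk n A (y # zs)"
    using is_walk_wjoinD[of n A "[x, y]" "y # zs"] c_join assms(3) by auto
  then show "is_walk n A (closed_rotate1 c)" unfolding rot using lx by (simp add: is_walk_wjoin)
  show "rweight A (closed_rotate1 c) = rweight A c"
    unfolding rot using lx by (subst c_join) (simp add: rweight_wjoin)
  have "butlast (y # zs) @ [x] = y # zs" using lx append_butlast_last_id[of "y # zs"] by simp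
  then show "butlast (closed_rotate1 c) = rotate1 (butlast c)" by (simp add: closed_rotate1_def c)
  have "x \<in> set (y # zs)" using lx last_in_set[of "y # zs"] by simp
  then show "set (closed_rotate1 c) = set c" by (auto simp: closed_rotate1_def c)
  show "length (closed_rotate1 c) = length c" "hd (closed_rotate1 c) = last (closed_rotate1 c)"
    by (auto simp: closed_rotate1_def c)
qed

lemma closed_rotate1_funpow:
  assumes "length c \<ge> 2" "hd c = last c" "is_walk n A c"
  shows "length ((closed_rotate1 ^^ k) c) = length c \<and>
    hd ((closed_rotate1 ^^ k) c) = last ((closed_rotate1 ^^ k) c) \<and>
    is_walk n A ((closed_rotate1 ^^ k) c) \<and> rweight A ((closed_rotate1 ^^ k) c) = rweight A c \<and>
    butlast ((closed_rotate1 ^^ k) c) = rotate k (butlast c) \<and> set ((closed_rotate1 ^^ k) c) = set c"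
proof (induction k)
  case (Suc k)
  then have "length ((closed_rotate1 ^^ k) c) \<ge> 2" using assms by simp
  then show ?case using closed_rotate1[of "(closed_rotate1 ^^ k) c" n A] Suc by simp
qed (use assms in simp)

lemma same_cycle_sym: "same_cycle c d \<Longrightarrow> same_cycle d c"
proof -
  assume "same_cycle c d"
  then obtain k where k: "butlast c = rotate k (butlast d)" by (auto simp: same_cycle_def)
  define l where "l = length (butlast d)"
  have "butlast d = rotate (l - k mod l + k) (butlast d)"
  proof (cases "l = 0")
    case False
    have "k mod l < l" "k div l * l + k mod l = k" using False by simp_all
    then have "l - k mod l + k = l + k div l * l" by linarith
    then show ?thesis by (simp add: l_def)
  qed (simp add: l_def)
  then have "butlast d = rotate (l - k mod l) (butlast c)" by (simp add: k rotate_rotate)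
  then show "same_cycle d c" by (auto simp: same_cycle_def)
qed

lemma same_cycle_trans:
  assumes "same_cycle c d" "same_cycle d e"
  shows "same_cycle c e"
proof -
  obtain k j where "butlast c = rotate k (butlast d)" "butlast d = rotate j (butlast e)"
    using assms by (auto simp: same_cycle_def)
  then have "butlast c = rotate (k + j) (butlast e)" by (simp add: rotate_rotate)
  then show ?thesis by (auto simp: same_cycle_def)
qed

lemma ham_cycle_rotate_to:
  assumes ham: "ham_cycle n A c" and a: "a \<in> {1..n}"
  obtains d where "is_walk n A d" "length d = n + 1" "hd d = a" "last d = a"
    "distinct (butlast d)" "set d = {1..n}" "rweight A d = rweight A c" "same_cycle d c"
proof -
  have c: "is_walk n A c" "length c \<ge> 2" "hd c = last c" "distinct (butlast c)" "set c = {1..n}"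
    using ham by (auto simp: ham_cycle_def is_cycle_def)
  have "c \<noteq> []" using c(2) by auto
  then have "set c = set (butlast c @ [last c])" and "c ! 0 = last c"
    using c(3) by (simp_all add: hd_conv_nth[symmetric])
  moreover have "butlast c ! 0 = last c"
    using c(2) \<open>c ! 0 = last c\<close> by (simp add: nth_butlast)
  then have "last c \<in> set (butlast c)" using c(2) nth_mem[of 0 "butlast c"] by simp
  ultimately have "set c = set (butlast c)" by auto
  then have set_bc: "set (butlast c) = {1..n}" using c(5) by simp
  then have len_bc: "length (butlast c) = n" using distinct_card[OF c(4)] by simp
  have "a \<in> set (butlast c)" using a set_bc by simp
  then obtain k where k: "k < n" "butlast c ! k = a"
    using len_bc by (metis in_set_conv_nth)
  define d where "d = (closed_rotate1 ^^ k) c"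
  note d = closed_rotate1_funpow[OF c(2,3,1), of k, folded d_def]
  have bd: "butlast d = rotate k (butlast c)" using d by simp
  have "length (butlast d) = n" using bd len_bc by simp
  then have "butlast d \<noteq> []" using k(1) by (auto simp del: length_butlast)
  then have "hd d = hd (butlast d)" by (cases d) auto
  also have "\<dots> = a"
    using bd k \<open>butlast d \<noteq> []\<close> len_bc hd_rotate_conv_nth[of "butlast c" k] by auto
  finally have "hd d = a" .
  moreover have "same_cycle d c" using bd by (auto simp: same_cycle_def)
  moreover have "length d = n + 1" using d len_bc c(2) by simp
  ultimately show ?thesis using that[of d] d c by simp
qed

lemma walk_splice:
  assumes "is_walk n A H" "is_walk n A C" "v < length H" "p < length C" "H ! v = C ! p"
  defines "X \<equiv> wjoin (take (Suc v) H) (drop p C)"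
  shows "is_walk n A X" "hd X = hd H" "last X = last C" "wlen X = v + (wlen C - p)"
    "rweight A X = rweight A (take (Suc v) H) + rweight A (drop p C)"
    "set (take (Suc v) H) \<subseteq> set X"
proof -
  have ne: "take (Suc v) H \<noteq> []" "drop p C \<noteq> []" using assms(3,4) by auto
  have meet: "last (take (Suc v) H) = hd (drop p C)"
    using assms(3-5) by (simp add: take_Suc_conv_app_nth hd_drop_conv_nth)
  show "is_walk n A X" unfolding X_def
    using is_walk_take[OF assms(1)] is_walk_drop[OF assms(2,4)] meet by (simp add: is_walk_wjoin)
  show "hd X = hd H" unfolding X_def using ne by (simp add: hd_wjoin)
  show "last X = last C" unfolding X_def using ne meet by (simp add: last_wjoin)
  show "wlen X = v + (wlen C - p)" unfolding X_def using ne assms(3,4) by (simp add: wlen_wjoin) (simp add: wlen_def)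
  show "rweight A X = rweight A (take (Suc v) H) + rweight A (drop p C)"
    unfolding X_def using ne meet by (rule rweight_wjoin)
  show "set (take (Suc v) H) \<subseteq> set X" unfolding X_def by (simp add: wjoin_def)
qed

lemma cycle_rweight_nonpos:
  assumes fin: "\<forall>i\<in>{1..n}. \<forall>j\<in>{1..n}. A i j \<noteq> \<infinity>"
    and lambda0: "mcm n A = 0" and c: "is_cycle n A c"
  shows "rweight A c \<le> 0"
proof -
  have len: "0 < wlen c" using c by (simp add: is_cycle_def wlen_def)
  have walk: "is_walk n A c" using c by (simp add: is_cycle_def)
  have "cycle_mean A c \<le> mcm n A" unfolding mcm_def by (rule SUP_upper) (use c in simp)
  then have "ereal (rweight A c) / ereal (real (wlen c)) \<le> 0"
    using wweight_eq_rweight[OF fin walk] lambda0 by (simp add: cycle_mean_def)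
  then have "rweight A c / real (wlen c) \<le> 0" using len by simp
  then show ?thesis using len by (simp add: divide_le_0_iff)
qed

definition max_closed_walk :: "nat \<Rightarrow> mat \<Rightarrow> nat \<Rightarrow> nat list \<Rightarrow> bool" where
  "max_closed_walk n A b H \<longleftrightarrow> (\<forall>Q. is_walk n A Q \<and> hd Q = hd H \<and> last Q = hd H \<and> b \<in> set Q \<longrightarrow>
     rweight A Q \<le> rweight A H \<and> (rweight A Q = rweight A H \<longrightarrow> wlen H \<le> wlen Q))"

definition canon_cycle :: "nat \<Rightarrow> nat list" where
  "canon_cycle n = n # [1..<n + 1]"

lemma canon_cycle_simps:
  "canon_cycle n \<noteq> []" "length (canon_cycle n) = n + 1" "hd (canon_cycle n) = n" "last (canon_cycle n) = n"
  "wlen (canon_cycle n) = n" "canon_cycle n ! 0 = n"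
  by (simp_all add: canon_cycle_def wlen_def)

lemma nth_canon_cycle: "1 \<le> i \<Longrightarrow> i \<le> n \<Longrightarrow> canon_cycle n ! i = i"
  by (cases i) (auto simp: canon_cycle_def simp del: upt_Suc)

lemma nth_in_set_take: "i < k \<Longrightarrow> i < length xs \<Longrightarrow> xs ! i \<in> set (take k xs)"
  using nth_mem[of i "take k xs"] by simp

lemma canon_cycle_mismatch:
  assumes n: "2 \<le> n" and C: "length C = n + 1" "hd C = n" "last C = n" "1 \<in> set C"
    and neq: "C \<noteq> canon_cycle n"
  obtains p where "0 < p" "p < n" "C ! p \<noteq> p" "1 \<in> set (take (Suc p) C)"
proof -
  have "C \<noteq> []" using C(1) by auto
  then have C0: "C ! 0 = n" and Cn: "C ! n = n"
    using C hd_conv_nth[of C] last_conv_nth[of C] by simp_all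
  obtain j where j: "j < n + 1" "C ! j \<noteq> canon_cycle n ! j"
    using neq nth_equalityI[of C "canon_cycle n"] C(1) by (auto simp: canon_cycle_simps)
  have "canon_cycle n ! 0 = n" by (simp add: canon_cycle_simps)
  then have "j \<noteq> 0" using j(2) C0 by metis
  moreover have "j \<noteq> n" using j(2) Cn n by (auto simp: nth_canon_cycle)
  ultimately have j': "0 < j" "j < n" "C ! j \<noteq> j" using j nth_canon_cycle[of j n] by auto
  show ?thesis
  proof (cases "C ! 1 = 1")
    case True
    then have "1 \<in> set (take (Suc j) C)"
      using j' C(1) nth_in_set_take[of 1 "Suc j" C] by simp
    then show ?thesis using that j' by blast
  next
    case False
    obtain q where q: "q < n + 1" "C ! q = 1" using C(1,4) by (metis in_set_conv_nth)
    have "q \<noteq> 0"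
    proof
      assume "q = 0"
      then show False using q(2) C0 n by simp
    qed
    moreover have "q \<noteq> n"
    proof
      assume "q = n"
      then show False using q(2) Cn n by simp
    qed
    moreover have "q \<noteq> 1" using q(2) False by auto
    moreover have "1 \<in> set (take (Suc q) C)"
      using q C(1) nth_in_set_take[of q "Suc q" C] by simp
    ultimately show ?thesis using that[of q] q by auto
  qed
qed

lemma max_closed_walk_eq_canon_cycle:
  assumes n: "2 \<le> n" and H: "is_walk n A (canon_cycle n)"
    and best: "max_closed_walk n A 1 (canon_cycle n)"
    and C: "is_walk n A C" "length C = n + 1" "hd C = n" "last C = n" "distinct (butlast C)"
      "1 \<in> set C"
    and eq: "rweight A C = rweight A (canon_cycle n)"
  shows "C = canon_cycle n"
proof (rule ccontr)
  let ?H = "canon_cycle n"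
  assume "C \<noteq> ?H"
  then obtain p where p: "0 < p" "p < n" "C ! p \<noteq> p" "1 \<in> set (take (Suc p) C)"
    using canon_cycle_mismatch[OF n C(2-4,6)] by blast
  define v where "v = C ! p"
  have "v \<in> set C" using C(2) p(2) by (simp add: v_def)
  then have "v \<in> {1..n}" using C(1) by (auto simp: is_walk_def)
  moreover have "v \<noteq> n"
  proof
    assume "v = n"
    have "C \<noteq> []" using C(2) by auto
    then have "C ! 0 = n" using C(3) by (simp add: hd_conv_nth[symmetric])
    then have "butlast C ! p = butlast C ! 0"
      using \<open>v = n\<close> C(2) p(2) by (simp add: v_def nth_butlast)
    then show False using nth_eq_iff_index_eq[OF C(5)] C(2) p by simp
  qed
  ultimately have v: "0 < v" "v < n" "?H ! v = v" using nth_canon_cycle[of v n] by auto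
  have lens: "v < length ?H" "p < length C" and meet: "?H ! v = C ! p"
    using v p C(2) by (simp_all add: v_def canon_cycle_simps)
  define X where "X = wjoin (take (Suc v) ?H) (drop p C)"
  define Y where "Y = wjoin (take (Suc p) C) (drop v ?H)"
  note X = walk_splice[OF H C(1) lens meet, folded X_def]
  note Y = walk_splice[OF C(1) H lens(2,1) meet[symmetric], folded Y_def]
  have "?H ! 1 = 1" using n by (simp add: nth_canon_cycle)
  then have "1 \<in> set (take (Suc v) ?H)"
    using v nth_in_set_take[of 1 "Suc v" ?H] by (simp add: canon_cycle_simps)
  then have "rweight A X \<le> rweight A ?H \<and> (rweight A X = rweight A ?H \<longrightarrow> n \<le> wlen X)"
    using best X(1,2,3,6) C(4) by (auto simp: max_closed_walk_def canon_cycle_simps)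
  moreover have "rweight A Y \<le> rweight A ?H \<and> (rweight A Y = rweight A ?H \<longrightarrow> n \<le> wlen Y)"
    using best Y(1,2,3,6) C(3) p(4) by (auto simp: max_closed_walk_def canon_cycle_simps)
  moreover have "rweight A X + rweight A Y = rweight A ?H + rweight A C"
    using X(5) Y(5) rweight_take_drop[OF lens(1), of A] rweight_take_drop[OF lens(2), of A] by simp
  moreover have "wlen X = v + (n - p)" "wlen Y = p + (n - v)"
    using X(4) Y(4) C(2) by (simp_all add: canon_cycle_simps wlen_def)
  ultimately show False using eq v p v_def by linarith
qed

lemma canon_ham_cycle_max_unique:
  assumes fin: "\<forall>i\<in>{1..n}. \<forall>j\<in>{1..n}. A i j \<noteq> \<infinity>"
    and n: "2 \<le> n" and walk: "is_walk n A (canon_cycle n)"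
    and best: "max_closed_walk n A 1 (canon_cycle n)"
  defines "H \<equiv> [1..<n + 1] @ [1]"
  shows "ham_cycle n A H \<and> (\<forall>c. ham_cycle n A c \<longrightarrow> wweight A c \<le> wweight A H)
    \<and> (\<forall>c. ham_cycle n A c \<and> wweight A c = wweight A H \<longrightarrow> same_cycle c H)"
proof -
  let ?C = "canon_cycle n"
  have "closed_rotate1 ?C = tl ?C @ [1]"
    using nth_canon_cycle[of 1 n] n by (simp add: closed_rotate1_def)
  then have rot: "H = closed_rotate1 ?C" by (simp add: H_def canon_cycle_def)
  have "2 \<le> length ?C" "hd ?C = last ?C" using n by (simp_all add: canon_cycle_simps)
  note H = closed_rotate1[OF this walk, folded rot]
  have "same_cycle H ?C" unfolding same_cycle_def using H(5) by (intro exI[of _ 1]) simp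
  have "is_cycle n A H" using H(3) n by (simp add: is_cycle_def H_def butlast_append)
  then have ham: "ham_cycle n A H" using n by (auto simp: ham_cycle_def H_def)
  have ww: "wweight A c = ereal (rweight A c)" if "ham_cycle n A c" for c
    using wweight_eq_rweight[OF fin] that by (simp add: ham_cycle_def is_cycle_def)
  have max_uniq: "rweight A c \<le> rweight A H \<and> (rweight A c = rweight A H \<longrightarrow> same_cycle c H)"
    if c: "ham_cycle n A c" for c
  proof -
    have "n \<in> {1..n}" using n by simp
    then obtain d where d: "is_walk n A d" "length d = n + 1" "hd d = n" "last d = n"
      "distinct (butlast d)" "set d = {1..n}" "rweight A d = rweight A c" "same_cycle d c"
      by (rule ham_cycle_rotate_to[OF c])
    have "1 \<in> set d" using d(6) n by simp
    then have "rweight A d \<le> rweight A ?C"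
      using best d(1,3,4) by (simp add: max_closed_walk_def canon_cycle_simps)
    moreover have "same_cycle c H" if "rweight A d = rweight A ?C"
    proof -
      have "d = ?C"
        using max_closed_walk_eq_canon_cycle[OF n walk best d(1-5) \<open>1 \<in> set d\<close> that] .
      then have "same_cycle c ?C" using same_cycle_sym[OF d(8)] by simp
      then show ?thesis using same_cycle_trans same_cycle_sym[OF \<open>same_cycle H ?C\<close>] by blast
    qed
    ultimately show ?thesis using d(7) H(4) by auto
  qed
  have "wweight A c \<le> wweight A H \<and> (wweight A c = wweight A H \<longrightarrow> same_cycle c H)"
    if "ham_cycle n A c" for c
    using max_uniq[OF that] ww[OF that] ww[OF ham] by simp
  with ham show ?thesis by blast
qed

lemma twice_optimal_replace_suffix:
  assumes fin: "\<forall>i\<in>{1..n}. \<forall>j\<in>{1..n}. A i j \<noteq> \<infinity>"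
    and opt: "twice_optimal n A g Z (wjoin R C)"
    and R: "R \<noteq> []" "last R = hd C" and C: "C \<noteq> []"
    and Q: "is_walk n A Q" "hd Q = hd C" "last Q = last C" "set (wjoin R Q) \<inter> set Z \<noteq> {}"
    and len: "wlen Q mod g = wlen C mod g"
  shows "rweight A Q \<le> rweight A C \<and> (rweight A Q = rweight A C \<longrightarrow> wlen C \<le> wlen Q)"
proof -
  let ?W = "wjoin R C" and ?V = "wjoin R Q"
  have Q_ne: "Q \<noteq> []" using Q(1) by (simp add: is_walk_def)
  have W: "is_walk n A ?W" using opt by (simp add: twice_optimal_def walk_through_def)
  then have "is_walk n A R" using is_walk_wjoinD(1) R C by blast
  then have V: "is_walk n A ?V" using Q R by (simp add: is_walk_wjoin)
  have "hd ?V = hd ?W" "last ?V = last ?W"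
    using R C Q Q_ne by (simp_all add: hd_wjoin last_wjoin)
  then have through: "walk_through n A Z (hd ?W) (last ?W) ?V"
    using V Q(4) by (simp add: walk_through_def)
  have "wlen ?V mod g = wlen ?W mod g"
    using R C Q_ne mod_add_cong[OF refl len, of "wlen R"] by (simp add: wlen_wjoin)
  then have "wweight A ?V \<le> wweight A ?W \<and> (wweight A ?V = wweight A ?W \<longrightarrow> wlen ?W \<le> wlen ?V)"
    using opt through by (simp add: twice_optimal_def)
  moreover have "wweight A ?V = ereal (rweight A R + rweight A Q)"
    using wweight_eq_rweight[OF fin V] R Q Q_ne by (simp add: rweight_wjoin)
  moreover have "wweight A ?W = ereal (rweight A R + rweight A C)"
    using wweight_eq_rweight[OF fin W] R C by (simp add: rweight_wjoin)
  ultimately show ?thesis using R C Q_ne by (simp add: wlen_wjoin)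
qed

lemma max_closed_walk_from_powers:
  assumes g: "0 < g"
    and bound: "\<And>Q. is_walk n A Q \<Longrightarrow> hd Q = hd H \<Longrightarrow> last Q = hd H \<Longrightarrow> b \<in> set Q \<Longrightarrow>
      g dvd wlen Q \<Longrightarrow> rweight A Q \<le> real g * rweight A H \<and>
        (rweight A Q = real g * rweight A H \<longrightarrow> g * wlen H \<le> wlen Q)"
  shows "max_closed_walk n A b H"
  unfolding max_closed_walk_def
proof (intro allI impI, elim conjE)
  fix Q assume Q: "is_walk n A Q" "hd Q = hd H" "last Q = hd H" "b \<in> set Q"
  have ne: "Q \<noteq> []" and closed: "hd Q = last Q" using Q by (auto simp: is_walk_def)
  note pow = wpow_closed[OF ne closed, of g]
  have "rweight A (wpow Q g) \<le> real g * rweight A H \<and>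
      (rweight A (wpow Q g) = real g * rweight A H \<longrightarrow> g * wlen H \<le> wlen (wpow Q g))"
  proof (rule bound)
    show "is_walk n A (wpow Q g)" using is_walk_wpow[OF Q(1) closed] .
    show "b \<in> set (wpow Q g)" using set_wpow[OF g, of Q] Q(4) by blast
  qed (use pow Q in auto)
  then show "rweight A Q \<le> rweight A H \<and> (rweight A Q = rweight A H \<longrightarrow> wlen H \<le> wlen Q)"
    using rweight_wpow[OF ne closed] pow g by simp
qed

lemma not_twice_optimal_concat_replicate:
  assumes fin: "\<forall>i\<in>{1..n}. \<forall>j\<in>{1..n}. A i j \<noteq> \<infinity>"
    and lambda0: "mcm n A = 0" and n: "2 \<le> n" and one: "1 \<in> set Z"
  shows "\<not> twice_optimal n A n Z (concat (replicate n [1..<n + 1]))"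
proof
  assume opt: "twice_optimal n A n Z (concat (replicate n [1..<n + 1]))"
  let ?H = "canon_cycle n" and ?R = "[1..<n + 1]"
  define C where "C = wpow ?H (n - 1)"
  have closed: "?H \<noteq> []" "hd ?H = last ?H" by (simp_all add: canon_cycle_simps)
  note C = wpow_closed[OF closed, of "n - 1", folded C_def]
  have R: "?R \<noteq> []" "last ?R = hd C" "hd ?R = 1" using n C by (simp_all add: canon_cycle_simps)
  have "concat (replicate n ?R) = ?R @ concat (replicate (n - 1) ?R)"
    using n by (cases n) auto
  also have "\<dots> = wjoin ?R C"
    using tl_wpow_Cons[of n ?R "n - 1"] by (simp add: C_def wjoin_def canon_cycle_def)
  finally have opt': "twice_optimal n A n Z (wjoin ?R C)" using opt by simp
  then have "is_walk n A C"
    using R C is_walk_wjoinD(2) by (auto simp: twice_optimal_def walk_through_def)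
  then have "is_walk n A ?H" using is_walk_wpowD closed n by (auto simp: C_def)
  then have "is_cycle n A ?H" using n by (simp add: is_cycle_def canon_cycle_def)
  then have "rweight A C \<le> 0"
    using cycle_rweight_nonpos[OF fin lambda0] rweight_wpow[OF closed] n
    by (simp add: C_def mult_nonneg_nonpos)
  moreover have "0 \<le> rweight A C \<and> (0 = rweight A C \<longrightarrow> wlen C \<le> 0)"
  proof -
    have "is_walk n A [n]" using n by (simp add: is_walk_def)
    moreover have "hd [n] = hd C" "last [n] = last C" using C by (simp_all add: canon_cycle_simps)
    moreover have "1 \<in> set (wjoin ?R [n])" using n by (simp add: wjoin_def)
    then have "set (wjoin ?R [n]) \<inter> set Z \<noteq> {}" using one by blast
    moreover have "wlen [n] mod n = wlen C mod n" using C by (simp add: canon_cycle_simps wlen_def)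
    ultimately have "rweight A [n] \<le> rweight A C \<and> (rweight A [n] = rweight A C \<longrightarrow> wlen C \<le> wlen [n])"
      using twice_optimal_replace_suffix[OF fin opt' R(1,2)] C by blast
    then show ?thesis by (simp add: wlen_def rweight_def)
  qed
  moreover have "0 < wlen C" using C n by (simp add: canon_cycle_simps)
  ultimately show False by linarith
qed

lemma twice_optimal_wpow_suffix_max:
  assumes fin: "\<forall>i\<in>{1..n}. \<forall>j\<in>{1..n}. A i j \<noteq> \<infinity>"
    and opt: "twice_optimal n A g Z (wjoin P (wpow H g))" and g: "0 < g"
    and P: "P \<noteq> []" "last P = hd H" and H: "H \<noteq> []" "hd H = last H"
    and b: "b \<in> set Z"
  shows "max_closed_walk n A b H"
proof (rule max_closed_walk_from_powers[OF g])
  note C = wpow_closed[OF H, of g]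
  fix Q assume Q: "is_walk n A Q" "hd Q = hd H" "last Q = hd H" "b \<in> set Q" "g dvd wlen Q"
  have "Q \<noteq> []" using Q(1) by (simp add: is_walk_def)
  then have "set (wjoin P Q) \<inter> set Z \<noteq> {}"
    using set_wjoin[of P Q] Q P b by auto
  moreover have "wlen Q mod g = wlen (wpow H g) mod g" using Q(5) C by simp
  ultimately show "rweight A Q \<le> real g * rweight A H \<and>
      (rweight A Q = real g * rweight A H \<longrightarrow> g * wlen H \<le> wlen Q)"
    using twice_optimal_replace_suffix[OF fin opt P(1), of Q] Q P C rweight_wpow[OF H, of A g]
    by auto
qed

text \<open>Only finiteness, lambda(A) = 0, the location of Z0 and twice optimality of W0 enter the
  proof.\<close>

theorem corollaryc:
  fixes n g :: nat and A :: mat and Z0 W0 :: "nat list"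
  assumes finite_entries: "\<forall>i\<in>{1..n}. \<forall>j\<in>{1..n}. A i j \<noteq> \<infinity>"
    and lambda0: "mcm n A = 0"
    and g_def: "g = girth_crit n A"
    and g2: "g \<ge> 2"
    and not22: "(n, g) \<noteq> (2, 2)"
    and T1_DM: "T1 n A = DM g n"
    and Z0_cycle: "crit_graph_cycle n A Z0"
    and Z0_len: "wlen Z0 = g"
    and Z0_unique: "\<forall>c. crit_graph_cycle n A c \<and> wlen c = g \<longrightarrow> same_cycle c Z0"
    and W0_int: "interesting n A g Z0 W0"
    and Z0_nodes: "set Z0 = {1..g}"
    and W0_form: "W0 = [g + 1..<n + 1] @ concat (replicate g [1..<n + 1])"
  shows "ham_cycle n A ([1..<n + 1] @ [1])
    \<and> (\<forall>c. ham_cycle n A c \<longrightarrow> wweight A c \<le> wweight A ([1..<n + 1] @ [1]))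
    \<and> (\<forall>c. ham_cycle n A c \<and> wweight A c = wweight A ([1..<n + 1] @ [1])
           \<longrightarrow> same_cycle c ([1..<n + 1] @ [1]))"
proof -
  let ?H = "canon_cycle n" and ?P = "[g + 1..<n + 1]"
  have opt: "twice_optimal n A g Z0 W0" using W0_int by (simp add: interesting_def)
  have one: "1 \<in> set Z0" using Z0_nodes g2 by simp
  have "set Z0 \<subseteq> {1..n}" using Z0_cycle by (simp add: crit_graph_cycle_def is_cycle_def is_walk_def)
  then have "g \<le> n" using Z0_nodes g2 by auto
  moreover have "g \<noteq> n"
    using not_twice_optimal_concat_replicate[OF finite_entries lambda0 _ one] opt W0_form g2
    by auto
  ultimately have n: "g < n" "2 \<le> n" using g2 by auto
  have W0: "W0 = wjoin ?P (wpow ?H g)"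
    using W0_form by (simp add: wjoin_def canon_cycle_def tl_wpow_Cons)
  have P: "?P \<noteq> []" "last ?P = hd ?H" using n by (simp_all add: canon_cycle_simps)
  have H: "?H \<noteq> []" "hd ?H = last ?H" by (simp_all add: canon_cycle_simps)
  note pow = wpow_closed[OF H, of g]
  have "is_walk n A (wpow ?H g)"
    using opt P pow is_walk_wjoinD(2) by (auto simp: W0 twice_optimal_def walk_through_def)
  then have walk: "is_walk n A ?H" using is_walk_wpowD H g2 by simp
  show ?thesis
    using canon_ham_cycle_max_unique[OF finite_entries n(2) walk]
      twice_optimal_wpow_suffix_max[OF finite_entries opt[unfolded W0] _ P H one] g2
    by simp
qed

end
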